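(* Consider the slotted transmission system and transmission policy $P$ described in the context, with loss probability $p$ satisfying $0<p<1$, feedback delay $d\ge 0$ and threshold $\gamma\ge 0$. Suppose that the estimate $\hat{Q}^r_k$ satisfies $Q^r_k-\hat{Q}^r_k\le\delta$ for all $k=1,2,\dots$, for some $\delta\ge 0$. Then $Q^r_k$ converges almost surely to the interval $0\le Q^r_k\le \gamma+\delta+1$ as $k\to\infty$.
   Context: Time is slotted, slots $k=1,2,\dots$; each slot carries at most one packet transmission over a lossy path. Information packets arrive at the transmitter according to $A_k\in\{0,1\}$ and are held in a transmitter queue $Q^t_{k+1}=[Q^t_k+A_k-S_k]^+$, $Q^t_1=0$, where $[x]^+=\max\{x,0\}$. In slot $k$, $S_k\in\{0,1\}$ indicates that an information packet is sent and $C_k\in\{0,1\}$ indicates that a coded packet is sent ($S_k+C_k\le 1$). Erasures: $X_k=1$ if the packet sent in slot $k$ is erased and $0$ otherwise; $\{X_k\}$ is i.i.d. with $\Pr(X_k=1)=p$, independent of the transmitter's decisions up to slot $k$. The virtual receiver queue evolves as $Q^r_{k+1}=[Q^r_k+S_kX_k-C_k(1-X_k)]^+$ (non-negative integer valued). Feedback reaches the transmitter with delay $d$ slots, so in slot $k$ the transmitter knows $Q^r_{k-d}$ (quantities with non-positive indices are given initial values). The estimator is $\hat{Q}^r_k=Q^r_{k-d}+\sum_{j=k-d}^{k-1}(S_jp-C_j(1-p))$. Transmission policy $P$ with parameter $\gamma\ge 0$: $C_k\in\arg\min_{C\in\{0,1\}}(-\hat{Q}^r_k+\gamma)C$ and $S_k=\min\{Q^t_k+A_k,\,1-C_k\}$.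 *)

theory Defs
  imports "HOL-Probability.Probability"
begin

text \<open>Slots are indexed by integers; the system equations are imposed for slots
  k \<ge> 1, while quantities with non-positive indices are arbitrary given initial values.\<close>

definition Qhat :: "(int \<Rightarrow> int) \<Rightarrow> (int \<Rightarrow> int) \<Rightarrow> (int \<Rightarrow> int) \<Rightarrow> real \<Rightarrow> nat \<Rightarrow> int \<Rightarrow> real" where
  "Qhat Qr S C p d k =
     real_of_int (Qr (k - int d)) +
     (\<Sum>j\<in>{k - int d..k - 1}. real_of_int (S j) * p - real_of_int (C j) * (1 - p))"

end

theory Submission
  imports Defs
begin

text \<open>Once the estimate of the receiver queue exceeds \<open>\<gamma>\<close>, the policy sends only coded
  packets; since the estimation error is at most \<open>\<delta>\<close>, this happens whenever
  \<open>Q\<^sup>r\<^sub>k > \<gamma> + \<delta>\<close>. Above that level the receiver queue therefore never grows and drops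
  by one in every slot without erasure, while below it the queue grows by at most one per
  slot. Erasures are independent with probability \<open>p < 1\<close>, so almost surely infinitely many
  slots are erasure-free, and the queue must enter and then stay in \<open>[0, \<gamma> + \<delta> + 1]\<close>.\<close>

lemma (in prob_space) prob_INT_indep_events_le_power:
  fixes A :: "int \<Rightarrow> 'a set"
  assumes indep: "indep_events A {m..}"
    and bound: "\<And>j. m \<le> j \<Longrightarrow> prob (A j) \<le> q"
    and "m \<le> k"
  shows "prob (\<Inter>j\<in>{k..}. A j) \<le> q ^ Suc n"
proof -
  have sub: "{k..k + int n} \<subseteq> {m..}" using \<open>m \<le> k\<close> by auto
  have events: "A j \<in> events" if "m \<le> j" for j
    using indep that by (auto simp: indep_events_def)
  have "prob (\<Inter>j\<in>{k..}. A j) \<le> prob (\<Inter>j\<in>{k..k + int n}. A j)"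
    using events \<open>m \<le> k\<close> by (intro finite_measure_mono sets.finite_INT) auto
  also have "\<dots> = (\<Prod>j\<in>{k..k + int n}. prob (A j))"
    using indep sub by (auto simp: indep_events_def)
  also have "\<dots> \<le> (\<Prod>j\<in>{k..k + int n}. q)"
    using sub by (intro prod_mono) (auto intro: bound)
  also have "\<dots> = q ^ Suc n"
    by (simp add: nat_add_distrib)
  finally show ?thesis .
qed

lemma (in prob_space) AE_frequently_not_in_indep_events:
  fixes A :: "int \<Rightarrow> 'a set"
  assumes indep: "indep_events A {m..}"
    and bound: "\<And>j. m \<le> j \<Longrightarrow> prob (A j) \<le> q"
    and "q < 1"
  shows "AE \<omega> in M. \<forall>k. \<exists>j\<ge>k. \<omega> \<notin> A j"
proof (rule AE_all_countable[THEN iffD2], intro allI)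
  fix k :: int
  let ?T = "\<Inter>j\<in>{max k m..}. A j"
  have "0 \<le> q" using bound[of m] measure_nonneg[of M "A m"] by linarith
  then have "(\<lambda>n. q ^ Suc n) \<longlonglongrightarrow> 0"
    using \<open>q < 1\<close> by (intro LIMSEQ_Suc LIMSEQ_power_zero) simp
  then have "prob ?T \<le> 0"
    using prob_INT_indep_events_le_power[OF indep bound] by (intro LIMSEQ_le_const) auto
  then have "prob ?T = 0"
    using measure_nonneg[of M ?T] by linarith
  moreover have "?T \<in> events"
    using indep by (intro sets.countable_INT') (auto simp: indep_events_def)
  ultimately have "AE \<omega> in M. \<omega> \<notin> ?T"
    by (simp add: prob_eq_0)
  then show "AE \<omega> in M. \<exists>j\<ge>k. \<omega> \<notin> A j"
    by eventually_elim auto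
qed

lemma eventually_le_if_drifts_down:
  fixes q :: "int \<Rightarrow> int" and B :: real
  assumes nonneg: "\<And>k. m \<le> k \<Longrightarrow> 0 \<le> q k"
    and step_le: "\<And>k. m \<le> k \<Longrightarrow> q (k + 1) \<le> q k + 1"
    and above_le: "\<And>k. m \<le> k \<Longrightarrow> B - 1 < q k \<Longrightarrow> q (k + 1) \<le> q k"
    and above_less: "\<And>k. m \<le> k \<Longrightarrow> B - 1 < q k \<Longrightarrow> P k \<Longrightarrow> q (k + 1) < q k"
    and frequently: "\<And>k. \<exists>j\<ge>k. P j"
  shows "\<exists>N. \<forall>k\<ge>N. q k \<le> B"
proof (cases "\<exists>n\<ge>m. q n \<le> B")
  case True
  then obtain n where "m \<le> n" "q n \<le> B" by blast
  have "q k \<le> B" if "n \<le> k" for k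
    using that
  proof (induction k rule: int_ge_induct)
    case (step k)
    then show ?case
      using \<open>m \<le> n\<close> step_le[of k] above_le[of k] by (cases "B - 1 < q k") auto
  qed (fact \<open>q n \<le> B\<close>)
  then show ?thesis by blast
next
  case False
  then have above: "B - 1 < q k" if "m \<le> k" for k
    using that by force
  have antimono: "q k' \<le> q k" if "m \<le> k" "k \<le> k'" for k k'
    using that(2)
  proof (induction k' rule: int_ge_induct)
    case (step k')
    then show ?case using that(1) above_le[of k'] above[of k'] by force
  qed simp
  have descent: "\<exists>k\<ge>m. q k \<le> q m - int i" for i
  proof (induction i)
    case (Suc i)
    then obtain k where "m \<le> k" "q k \<le> q m - int i" by blast
    moreover obtain j where "k \<le> j" "P j" using frequently by blast
    ultimately have "m \<le> j + 1" "q (j + 1) < q k"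
      using above_less[of j] above[of j] antimono[of k j] by force+
    then show ?case using \<open>q k \<le> q m - int i\<close> by (intro exI[of _ "j + 1"]) auto
  qed auto
  obtain k where "m \<le> k" "q k \<le> q m - int (nat (q m) + 1)"
    using descent by blast
  then show ?thesis using nonneg[of k] nonneg[of m] by simp
qed

lemma receiver_queue_eventually_le:
  fixes qr qt s c x a :: "int \<Rightarrow> int" and B :: real
  assumes "1 \<le> B"
    and coded_above: "\<And>k. 1 \<le> k \<Longrightarrow> B - 1 < qr k \<Longrightarrow> c k = 1"
    and x_val: "\<And>k. 1 \<le> k \<Longrightarrow> x k \<in> {0, 1}"
    and a_val: "\<And>k. 1 \<le> k \<Longrightarrow> a k \<in> {0, 1}"
    and c_val: "\<And>k. 1 \<le> k \<Longrightarrow> c k \<in> {0, 1}"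
    and qt_init: "qt 1 = 0"
    and qt_step: "\<And>k. 1 \<le> k \<Longrightarrow> qt (k + 1) = max 0 (qt k + a k - s k)"
    and qr_init: "0 \<le> qr 1"
    and qr_step: "\<And>k. 1 \<le> k \<Longrightarrow> qr (k + 1) = max 0 (qr k + s k * x k - c k * (1 - x k))"
    and s_def: "\<And>k. 1 \<le> k \<Longrightarrow> s k = min (qt k + a k) (1 - c k)"
    and frequently: "\<And>k. \<exists>j\<ge>k. x j = 0"
  shows "\<exists>N. \<forall>k\<ge>N. 0 \<le> qr k \<and> qr k \<le> B"
proof -
  have qt_nonneg: "0 \<le> qt k" if "1 \<le> k" for k
    using that by (induction k rule: int_ge_induct) (auto simp: qt_init qt_step)
  have qr_nonneg: "0 \<le> qr k" if "1 \<le> k" for k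
    using that by (induction k rule: int_ge_induct) (auto simp: qr_init qr_step)
  have s_bounds: "0 \<le> s k" "s k \<le> 1 - c k" if "1 \<le> k" for k
    using qt_nonneg[OF that] a_val[OF that] c_val[OF that] s_def[OF that] by auto
  have coded_step: "qr (k + 1) = qr k - (1 - x k)" if "1 \<le> k" "B - 1 < qr k" for k
  proof -
    have "c k = 1" "1 \<le> qr k" using coded_above[OF that] that \<open>1 \<le> B\<close> by linarith+
    then show ?thesis using qr_step[OF \<open>1 \<le> k\<close>] s_bounds[OF \<open>1 \<le> k\<close>] x_val[OF \<open>1 \<le> k\<close>] by auto
  qed
  have "\<exists>N. \<forall>k\<ge>N. qr k \<le> B"
  proof (rule eventually_le_if_drifts_down[where m = 1 and P = "\<lambda>k. x k = 0"])
    show "qr (k + 1) \<le> qr k + 1" if "1 \<le> k" for k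
      using qr_step[OF that] s_bounds[OF that] x_val[OF that] c_val[OF that] qr_nonneg[OF that]
      by (auto simp: max_def)
  qed (use qr_nonneg coded_step x_val frequently in force)+
  then obtain N where "\<forall>k\<ge>N. qr k \<le> B" by blast
  then show ?thesis using qr_nonneg by (intro exI[of _ "max N 1"]) auto
qed

theorem theorem1:
  fixes M :: "'a measure"
    and A X Qt Qr S C :: "int \<Rightarrow> 'a \<Rightarrow> int"
    and p \<gamma> \<delta> :: real and d :: nat
  assumes M: "prob_space M"
    and p: "0 < p" "p < 1"
    and \<gamma>: "\<gamma> \<ge> 0"
    and \<delta>: "\<delta> \<ge> 0"
    \<comment> \<open>erasures: i.i.d. Bernoulli(p), independent of the decisions up to slot k\<close>
    and X_indep: "prob_space.indep_vars M (\<lambda>_. count_space UNIV) X {1..}"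
    and X_val: "\<And>k \<omega>. k \<ge> 1 \<Longrightarrow> \<omega> \<in> space M \<Longrightarrow> X k \<omega> \<in> {0, 1}"
    and X_prob: "\<And>k. k \<ge> 1 \<Longrightarrow> measure M {\<omega> \<in> space M. X k \<omega> = 1} = p"
    and X_dec: "\<And>k. k \<ge> 1 \<Longrightarrow>
       prob_space.indep_set M
         (sets (vimage_algebra (space M) (X k) (count_space (UNIV :: int set))))
         (sets (vimage_algebra (space M) (\<lambda>\<omega>. map (\<lambda>j. (S j \<omega>, C j \<omega>)) [1..k])
                 (count_space (UNIV :: (int \<times> int) list set))))"
    \<comment> \<open>arrivals\<close>
    and A_val: "\<And>k \<omega>. k \<ge> 1 \<Longrightarrow> \<omega> \<in> space M \<Longrightarrow> A k \<omega> \<in> {0, 1}"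
    \<comment> \<open>transmitter queue\<close>
    and Qt_init: "\<And>\<omega>. \<omega> \<in> space M \<Longrightarrow> Qt 1 \<omega> = 0"
    and Qt_step: "\<And>k \<omega>. k \<ge> 1 \<Longrightarrow> \<omega> \<in> space M \<Longrightarrow>
       Qt (k + 1) \<omega> = max 0 (Qt k \<omega> + A k \<omega> - S k \<omega>)"
    \<comment> \<open>virtual receiver queue (non-negative integer valued)\<close>
    and Qr_init: "\<And>\<omega>. \<omega> \<in> space M \<Longrightarrow> Qr 1 \<omega> \<ge> 0"
    and Qr_step: "\<And>k \<omega>. k \<ge> 1 \<Longrightarrow> \<omega> \<in> space M \<Longrightarrow>
       Qr (k + 1) \<omega> = max 0 (Qr k \<omega> + S k \<omega> * X k \<omega> - C k \<omega> * (1 - X k \<omega>))"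
    \<comment> \<open>policy P with parameter gamma\<close>
    and C_val: "\<And>k \<omega>. k \<ge> 1 \<Longrightarrow> \<omega> \<in> space M \<Longrightarrow> C k \<omega> \<in> {0, 1}"
    and C_argmin: "\<And>k \<omega> c. k \<ge> 1 \<Longrightarrow> \<omega> \<in> space M \<Longrightarrow> c \<in> {0, 1::int} \<Longrightarrow>
       (\<gamma> - Qhat (\<lambda>j. Qr j \<omega>) (\<lambda>j. S j \<omega>) (\<lambda>j. C j \<omega>) p d k) * real_of_int (C k \<omega>)
         \<le> (\<gamma> - Qhat (\<lambda>j. Qr j \<omega>) (\<lambda>j. S j \<omega>) (\<lambda>j. C j \<omega>) p d k) * real_of_int c"
    and S_def: "\<And>k \<omega>. k \<ge> 1 \<Longrightarrow> \<omega> \<in> space M \<Longrightarrow>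
       S k \<omega> = min (Qt k \<omega> + A k \<omega>) (1 - C k \<omega>)"
    \<comment> \<open>estimation error bound\<close>
    and est: "\<And>k \<omega>. k \<ge> 1 \<Longrightarrow> \<omega> \<in> space M \<Longrightarrow>
       real_of_int (Qr k \<omega>) - Qhat (\<lambda>j. Qr j \<omega>) (\<lambda>j. S j \<omega>) (\<lambda>j. C j \<omega>) p d k \<le> \<delta>"
  shows "AE \<omega> in M. \<exists>N. \<forall>k\<ge>N. 0 \<le> Qr k \<omega> \<and> real_of_int (Qr k \<omega>) \<le> \<gamma> + \<delta> + 1"
proof -
  interpret prob_space M by (rule M)
  have "indep_events (\<lambda>k. {\<omega> \<in> space M. X k \<omega> = 1}) {1..}"
    using X_indep by (rule indep_eventsI_indep_vars) simp
  then have "AE \<omega> in M. \<forall>k. \<exists>j\<ge>k. \<omega> \<notin> {\<omega> \<in> space M. X j \<omega> = 1}"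
    by (rule AE_frequently_not_in_indep_events) (use X_prob p in auto)
  with AE_space show ?thesis
  proof eventually_elim
    case (elim \<omega>)
    have "\<exists>j\<ge>k. X j \<omega> = 0" for k
    proof -
      obtain j where "max k 1 \<le> j" "X j \<omega> \<noteq> 1"
        using elim by blast
      then show ?thesis using X_val[OF _ elim(1), of j] by auto
    qed
    moreover have "C k \<omega> = 1" if "1 \<le> k" "\<gamma> + \<delta> + 1 - 1 < Qr k \<omega>" for k
      using C_argmin[OF that(1) elim(1), of 1] C_val[OF that(1) elim(1)] est[OF that(1) elim(1)] that(2)
      by (auto simp: mult_le_cancel_left)
    moreover have "1 \<le> \<gamma> + \<delta> + 1" using \<gamma> \<delta> by simp
    ultimately show ?case
      using X_val A_val C_val Qt_init Qt_step Qr_init Qr_step S_def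
      by (intro receiver_queue_eventually_le[where qt = "\<lambda>k. Qt k \<omega>" and s = "\<lambda>k. S k \<omega>"
            and c = "\<lambda>k. C k \<omega>" and x = "\<lambda>k. X k \<omega>" and a = "\<lambda>k. A k \<omega>"]) (simp_all add: elim(1))
  qed
qed

end
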